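(* Assume (A.1)–(A.4). Let $\widehat\mu^N_\ast(\gamma)\in\arg\sup_{\widehat\mu^N\in\mathcal P^N}E_\gamma(\widehat\mu^N)$ and $\widehat\mu^N_\ast(\gamma,\varepsilon)\in\arg\sup_{\widehat\mu^N\in\mathcal P^N_\varepsilon}E_\gamma(\widehat\mu^N)$, where $\mathcal P^N_\varepsilon=\{\widehat\mu^N:W_{2,\varepsilon}(\widehat\mu^N,\widehat\mu_0^N)\le R\}$. Then for every $\varepsilon>0$, $$\big|E_0(\widehat\mu^N_\ast(\gamma))-E_0(\widehat\mu^N_\ast(\gamma,\varepsilon))\big|\le c\,e^{-2/\varepsilon}+\frac2\gamma,$$ where $c>0$ is a constant independent of $\varepsilon$.
   Context: $P_{x,y}$ is a distribution on $\mathcal X\times\{-1,+1\}$; $K_\mu(x,\hat x)=\int_0^\infty e^{-\xi\|x-\hat x\|_2^2}\mu(d\xi)$; $E_0(\mu)=\mathbb E[y\hat yK_\mu(x,\hat x)]$, $E_\gamma(\mu)=E_0(\mu)-\frac1\gamma\mathbb E[K_\mu^2(x,\hat x)]$. $\Xi=[\xi_l,\xi_u]$ (A.3); $\widehat\mu_0^N=\frac1N\sum_k\delta_{\xi_0^k}$ with $\xi_0^k$ i.i.d. from $\mu_0$ having a Lebesgue density (A.4). $\mathcal P^N=\{\widehat\mu^N=\frac1N\sum_{k=1}^N\delta_{\xi^k},\ \xi^k\in\Xi:W_2(\widehat\mu^N,\widehat\mu_0^N)\le R\}$. Sinkhorn divergence: for $\widehat\mu^N=\frac1N\sum\delta_{\xi^i}$,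 $\widehat\nu^N=\frac1N\sum\delta_{\zeta^j}$, $W^2_{2,\varepsilon}(\widehat\mu^N,\widehat\nu^N)=\sum_{i,j}\pi^\ast_{ij}|\xi^i-\zeta^j|^2$, $\pi^\ast=\arg\min\{\sum\pi_{ij}|\xi^i-\zeta^j|^2+\varepsilon\sum\pi_{ij}\log\pi_{ij}:\sum_i\pi_{ij}=\sum_j\pi_{ij}=\frac1N\}$. (A.1) $\mathcal X$ has finite diameter; (A.2) Slater: there exist empirical measures with $W_2(\cdot,\widehat\mu_0^N)<R$ and $W_{2,\varepsilon}(\cdot,\widehat\mu_0^N)<R$. *)

theory Defs
  imports "HOL-Probability.Probability"
begin

text \<open>Empirical measures with N atoms are represented by their atom vectors
  xi :: nat => real (only the entries xi k, k < N, matter).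
  The uniform empirical measure is (1/N) * sum of Dirac masses at xi k.\<close>

definition couplings :: "nat \<Rightarrow> (nat \<Rightarrow> nat \<Rightarrow> real) set" where
  "couplings N = {\<pi>. (\<forall>i j. i < N \<and> j < N \<longrightarrow> 0 \<le> \<pi> i j)
      \<and> (\<forall>i j. \<not> (i < N \<and> j < N) \<longrightarrow> \<pi> i j = 0)
      \<and> (\<forall>j<N. (\<Sum>i<N. \<pi> i j) = 1 / real N)
      \<and> (\<forall>i<N. (\<Sum>j<N. \<pi> i j) = 1 / real N)}"

definition transport_cost :: "nat \<Rightarrow> (nat \<Rightarrow> real) \<Rightarrow> (nat \<Rightarrow> real) \<Rightarrow> (nat \<Rightarrow> nat \<Rightarrow> real) \<Rightarrow> real" where
  "transport_cost N \<xi> \<zeta> \<pi> = (\<Sum>i<N. \<Sum>j<N. \<pi> i j * (\<xi> i - \<zeta> j)^2)"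

definition W2 :: "nat \<Rightarrow> (nat \<Rightarrow> real) \<Rightarrow> (nat \<Rightarrow> real) \<Rightarrow> real" where
  "W2 N \<xi> \<zeta> = sqrt (Inf (transport_cost N \<xi> \<zeta> ` couplings N))"

text \<open>Entropically regularised objective (with 0 * ln 0 = 0) and its minimiser.\<close>
definition sinkhorn_obj :: "nat \<Rightarrow> real \<Rightarrow> (nat \<Rightarrow> real) \<Rightarrow> (nat \<Rightarrow> real) \<Rightarrow> (nat \<Rightarrow> nat \<Rightarrow> real) \<Rightarrow> real" where
  "sinkhorn_obj N \<epsilon> \<xi> \<zeta> \<pi> =
     transport_cost N \<xi> \<zeta> \<pi> + \<epsilon> * (\<Sum>i<N. \<Sum>j<N. \<pi> i j * ln (\<pi> i j))"

definition sinkhorn_plan :: "nat \<Rightarrow> real \<Rightarrow> (nat \<Rightarrow> real) \<Rightarrow> (nat \<Rightarrow> real) \<Rightarrow> (nat \<Rightarrow> nat \<Rightarrow> real)" where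
  "sinkhorn_plan N \<epsilon> \<xi> \<zeta> = (THE \<pi>. \<pi> \<in> couplings N \<and>
      (\<forall>\<pi>'\<in>couplings N. sinkhorn_obj N \<epsilon> \<xi> \<zeta> \<pi> \<le> sinkhorn_obj N \<epsilon> \<xi> \<zeta> \<pi>'))"

definition W2eps :: "nat \<Rightarrow> real \<Rightarrow> (nat \<Rightarrow> real) \<Rightarrow> (nat \<Rightarrow> real) \<Rightarrow> real" where
  "W2eps N \<epsilon> \<xi> \<zeta> = sqrt (transport_cost N \<xi> \<zeta> (sinkhorn_plan N \<epsilon> \<xi> \<zeta>))"

definition Kemp :: "nat \<Rightarrow> (nat \<Rightarrow> real) \<Rightarrow> 'a::real_normed_vector \<Rightarrow> 'a \<Rightarrow> real" where
  "Kemp N \<xi> x x' = (\<Sum>k<N. exp (- \<xi> k * (norm (x - x'))^2)) / real N"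

definition E0 :: "('a::euclidean_space \<times> real) measure \<Rightarrow> nat \<Rightarrow> (nat \<Rightarrow> real) \<Rightarrow> real" where
  "E0 P N \<xi> = (\<integral>pq. snd (fst pq) * snd (snd pq) * Kemp N \<xi> (fst (fst pq)) (fst (snd pq)) \<partial>(P \<Otimes>\<^sub>M P))"

definition Egamma :: "('a::euclidean_space \<times> real) measure \<Rightarrow> nat \<Rightarrow> real \<Rightarrow> (nat \<Rightarrow> real) \<Rightarrow> real" where
  "Egamma P N \<gamma> \<xi> = E0 P N \<xi>
     - (1 / \<gamma>) * (\<integral>pq. (Kemp N \<xi> (fst (fst pq)) (fst (snd pq)))^2 \<partial>(P \<Otimes>\<^sub>M P))"

definition PN :: "nat \<Rightarrow> real \<Rightarrow> real \<Rightarrow> real \<Rightarrow> (nat \<Rightarrow> real) \<Rightarrow> (nat \<Rightarrow> real) set" where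
  "PN N xil xiu R \<xi>0 = {\<xi>. (\<forall>k<N. \<xi> k \<in> {xil..xiu}) \<and> W2 N \<xi> \<xi>0 \<le> R}"

definition PNeps :: "nat \<Rightarrow> real \<Rightarrow> real \<Rightarrow> real \<Rightarrow> real \<Rightarrow> (nat \<Rightarrow> real) \<Rightarrow> (nat \<Rightarrow> real) set" where
  "PNeps N \<epsilon> xil xiu R \<xi>0 = {\<xi>. (\<forall>k<N. \<xi> k \<in> {xil..xiu}) \<and> W2eps N \<epsilon> \<xi> \<xi>0 \<le> R}"

definition is_argmax_on :: "((nat \<Rightarrow> real) \<Rightarrow> real) \<Rightarrow> (nat \<Rightarrow> real) set \<Rightarrow> (nat \<Rightarrow> real) \<Rightarrow> bool" where
  "is_argmax_on f S \<xi> \<longleftrightarrow> \<xi> \<in> S \<and> (\<forall>\<xi>'\<in>S. f \<xi>' \<le> f \<xi>)"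

end

theory Submission
  imports Defs "HOL-Combinatorics.Permutations" "HOL-Real_Asymp.Real_Asymp"
begin

(*
  The entropy of a coupling lies in [-N^2, 0], so for small eps the Sinkhorn plan is
  eps N^2-optimal and every measure with W2 strictly below R lies in P^N_eps.  Such measures
  approximate any point of P^N: from a maximiser, move a little towards the reference atoms
  clamped into Xi, matched along an optimal permutation (optimal couplings of uniform
  empirical measures can be taken to be permutations, by a greedy rearrangement).  Since
  E_gamma is Lipschitz in the atoms, its supremum over P^N_eps is then within 1/gamma of the
  one over P^N, and as the regulariser lies in [0, 1/gamma] the E_0-values of the two
  maximisers differ by at most 2/gamma.  For the remaining, large eps both E_0-values lie in
  [-1, 1], and the constant c = 2 exp (2 / eps0) absorbs their difference.
*)

definition perm_coupling :: "nat \<Rightarrow> (nat \<Rightarrow> nat) \<Rightarrow> nat \<Rightarrow> nat \<Rightarrow> real" where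
  "perm_coupling N p i j = (if i < N \<and> j < N \<and> j = p i then 1 / real N else 0)"

lemma perm_coupling_in_couplings:
  assumes p: "p permutes {..<N}"
  shows "perm_coupling N p \<in> couplings N"
proof -
  have p_less: "p i < N" if "i < N" for i
    using permutes_in_image[OF p] that by simp
  have rows: "(\<Sum>j<N. perm_coupling N p i j) = 1 / real N" if "i < N" for i
    using that p_less[OF that] by (simp add: perm_coupling_def sum.delta')
  have cols: "(\<Sum>i<N. perm_coupling N p i j) = 1 / real N" if "j < N" for j
  proof -
    define g where "g j' = (if j' = j then 1 / real N else 0)" for j'
    have "(\<Sum>i<N. perm_coupling N p i j) = (\<Sum>i<N. (g \<circ> p) i)"
      using that p_less by (intro sum.cong) (auto simp: perm_coupling_def g_def)
    also have "\<dots> = (\<Sum>j'<N. g j')"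
      using sum.permute[OF p, of g] by simp
    finally show ?thesis using that by (simp add: g_def)
  qed
  show ?thesis
    using rows cols unfolding couplings_def by (auto simp: perm_coupling_def)
qed

lemma transport_cost_perm_coupling:
  assumes "p permutes {..<N}"
  shows "transport_cost N \<xi> \<zeta> (perm_coupling N p) = (\<Sum>i<N. (\<xi> i - \<zeta> (p i))^2) / real N"
proof -
  have "p i < N" if "i < N" for i
    using permutes_in_image[OF assms] that by simp
  then have "(\<Sum>j<N. perm_coupling N p i j * (\<xi> i - \<zeta> j)^2) = (\<xi> i - \<zeta> (p i))^2 / real N"
    if "i < N" for i
    using that by (simp add: perm_coupling_def if_distrib[of "\<lambda>x. x * _"] sum.delta' cong: if_cong)
  then show ?thesis
    unfolding transport_cost_def by (simp add: sum_divide_distrib)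
qed

lemma couplings_nonempty: "couplings N \<noteq> {}"
  using perm_coupling_in_couplings[OF permutes_id] by blast

lemma transport_cost_nonneg: "\<pi> \<in> couplings N \<Longrightarrow> 0 \<le> transport_cost N \<xi> \<zeta> \<pi>"
  unfolding transport_cost_def couplings_def by (auto intro!: sum_nonneg)

lemma coupling_sum_left:
  assumes "\<pi> \<in> couplings N"
  shows "(\<Sum>i<N. \<Sum>j<N. \<pi> i j * f i) = (\<Sum>i<N. f i) / real N"
proof -
  have "(\<Sum>i<N. \<Sum>j<N. \<pi> i j * f i) = (\<Sum>i<N. f i * (\<Sum>j<N. \<pi> i j))"
    by (simp add: sum_distrib_left mult.commute)
  also have "\<dots> = (\<Sum>i<N. f i / real N)"
    using assms by (auto simp: couplings_def intro!: sum.cong)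
  finally show ?thesis by (simp add: sum_divide_distrib)
qed

lemma coupling_sum_right:
  assumes "\<pi> \<in> couplings N"
  shows "(\<Sum>i<N. \<Sum>j<N. \<pi> i j * f j) = (\<Sum>j<N. f j) / real N"
proof -
  have "(\<Sum>i<N. \<Sum>j<N. \<pi> i j * f j) = (\<Sum>j<N. f j * (\<Sum>i<N. \<pi> i j))"
    by (subst sum.swap) (simp add: sum_distrib_left mult.commute)
  also have "\<dots> = (\<Sum>j<N. f j / real N)"
    using assms by (auto simp: couplings_def intro!: sum.cong)
  finally show ?thesis by (simp add: sum_divide_distrib)
qed

lemma mixed_product_le:
  fixes a x y A B :: real
  assumes "0 < a" "A \<le> a * x" "B \<le> a * y"
  shows "x * B + y * A \<le> a * (x * y) + A * B / a"
proof -
  have "0 \<le> (a * x - A) * (a * y - B)"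
    using assms by simp
  then have "a * (x * B + y * A) \<le> a * (a * (x * y) + A * B / a)"
    using assms(1) by (simp add: algebra_simps)
  then show ?thesis
    using assms(1) by simp
qed

lemma rank_one_update_marginals:
  fixes \<pi> :: "'i \<Rightarrow> 'j \<Rightarrow> real" and u :: "'i \<Rightarrow> real" and v :: "'j \<Rightarrow> real"
  assumes fin: "finite I" "finite J"
    and u: "\<And>i. i \<in> I \<Longrightarrow> 0 \<le> u i" "(\<Sum>i\<in>I. u i) = a"
    and v: "\<And>j. j \<in> J \<Longrightarrow> 0 \<le> v j" "(\<Sum>j\<in>J. v j) = a"
    and nonneg: "\<And>i j. i \<in> I \<Longrightarrow> j \<in> J \<Longrightarrow> 0 \<le> \<pi> i j"
    and rows: "\<And>i. i \<in> I \<Longrightarrow> (\<Sum>j\<in>J. \<pi> i j) = w - u i"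
    and cols: "\<And>j. j \<in> J \<Longrightarrow> (\<Sum>i\<in>I. \<pi> i j) = w - v j"
  shows "\<And>i j. i \<in> I \<Longrightarrow> j \<in> J \<Longrightarrow> 0 \<le> \<pi> i j + u i * v j / a"
    and "\<And>i. i \<in> I \<Longrightarrow> (\<Sum>j\<in>J. \<pi> i j + u i * v j / a) = w"
    and "\<And>j. j \<in> J \<Longrightarrow> (\<Sum>i\<in>I. \<pi> i j + u i * v j / a) = w"
proof -
  have a: "0 \<le> a"
    using u by (metis sum_nonneg)
  have u_zero: "a = 0 \<Longrightarrow> i \<in> I \<Longrightarrow> u i = 0" for i
    using u fin by (metis sum_nonneg_eq_0_iff)
  have v_zero: "a = 0 \<Longrightarrow> j \<in> J \<Longrightarrow> v j = 0" for j
    using v fin by (metis sum_nonneg_eq_0_iff)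
  show "0 \<le> \<pi> i j + u i * v j / a" if "i \<in> I" "j \<in> J" for i j
    using that nonneg u(1) v(1) a by simp
  show "(\<Sum>j\<in>J. \<pi> i j + u i * v j / a) = w" if "i \<in> I" for i
    using rows[OF that] v(2) u_zero[OF _ that]
    by (cases "a = 0") (simp_all add: sum.distrib sum_divide_distrib[symmetric] sum_distrib_left[symmetric])
  show "(\<Sum>i\<in>I. \<pi> i j + u i * v j / a) = w" if "j \<in> J" for j
    using cols[OF that] u(2) v_zero[OF _ that]
    by (cases "a = 0") (simp_all add: sum.distrib sum_divide_distrib[symmetric] sum_distrib_right[symmetric])
qed

text \<open>One step of the greedy rearrangement: match the largest \<open>\<xi> i\<^sub>0\<close> with the largest
  \<open>\<zeta> j\<^sub>0\<close> and spread the remaining mass of row \<open>i\<^sub>0\<close> and column \<open>j\<^sub>0\<close> over the other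
  entries by a rank-one update.\<close>

lemma rank_one_reduction:
  fixes \<pi> :: "'i \<Rightarrow> 'j \<Rightarrow> real" and \<xi> :: "'i \<Rightarrow> real" and \<zeta> :: "'j \<Rightarrow> real"
  assumes fin: "finite I" "finite J" and i0: "i0 \<in> I" and j0: "j0 \<in> J"
    and nonneg: "\<And>i j. i \<in> I \<Longrightarrow> j \<in> J \<Longrightarrow> 0 \<le> \<pi> i j"
    and rows: "\<And>i. i \<in> I \<Longrightarrow> (\<Sum>j\<in>J. \<pi> i j) = w"
    and cols: "\<And>j. j \<in> J \<Longrightarrow> (\<Sum>i\<in>I. \<pi> i j) = w"
    and \<xi>_max: "\<And>i. i \<in> I \<Longrightarrow> \<xi> i \<le> \<xi> i0"
    and \<zeta>_max: "\<And>j. j \<in> J \<Longrightarrow> \<zeta> j \<le> \<zeta> j0"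
  shows "\<exists>\<pi>'. (\<forall>i\<in>I - {i0}. \<forall>j\<in>J - {j0}. 0 \<le> \<pi>' i j)
    \<and> (\<forall>i\<in>I - {i0}. (\<Sum>j\<in>J - {j0}. \<pi>' i j) = w)
    \<and> (\<forall>j\<in>J - {j0}. (\<Sum>i\<in>I - {i0}. \<pi>' i j) = w)
    \<and> (\<Sum>i\<in>I. \<Sum>j\<in>J. \<pi> i j * (\<xi> i * \<zeta> j))
        \<le> w * (\<xi> i0 * \<zeta> j0) + (\<Sum>i\<in>I - {i0}. \<Sum>j\<in>J - {j0}. \<pi>' i j * (\<xi> i * \<zeta> j))"
proof -
  define I' J' where "I' = I - {i0}" and "J' = J - {j0}"
  define a where "a = w - \<pi> i0 j0"
  define u v where "u i = \<pi> i j0" and "v j = \<pi> i0 j" for i j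
  have sum_I: "(\<Sum>i\<in>I. f i) = f i0 + (\<Sum>i\<in>I'. f i)" for f :: "'i \<Rightarrow> real"
    using fin i0 by (simp add: I'_def sum.remove)
  have sum_J: "(\<Sum>j\<in>J. f j) = f j0 + (\<Sum>j\<in>J'. f j)" for f :: "'j \<Rightarrow> real"
    using fin j0 by (simp add: J'_def sum.remove)
  have u: "\<And>i. i \<in> I' \<Longrightarrow> 0 \<le> u i" "(\<Sum>i\<in>I'. u i) = a"
    using cols[OF j0] sum_I[of u] j0 nonneg by (auto simp: I'_def u_def a_def)
  have v: "\<And>j. j \<in> J' \<Longrightarrow> 0 \<le> v j" "(\<Sum>j\<in>J'. v j) = a"
    using rows[OF i0] sum_J[of v] i0 nonneg by (auto simp: J'_def v_def a_def)
  have fin': "finite I'" "finite J'" and nonneg': "\<And>i j. i \<in> I' \<Longrightarrow> j \<in> J' \<Longrightarrow> 0 \<le> \<pi> i j"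
    using fin nonneg by (auto simp: I'_def J'_def)
  have rows': "(\<Sum>j\<in>J'. \<pi> i j) = w - u i" if "i \<in> I'" for i
    using rows[of i] sum_J[of "\<pi> i"] that by (simp add: I'_def u_def)
  have cols': "(\<Sum>i\<in>I'. \<pi> i j) = w - v j" if "j \<in> J'" for j
    using cols[of j] sum_I[of "\<lambda>i. \<pi> i j"] that by (simp add: J'_def v_def)
  note marginals = rank_one_update_marginals[OF fin' u v nonneg' rows' cols']
  define A B where "A = (\<Sum>i\<in>I'. u i * \<xi> i)" and "B = (\<Sum>j\<in>J'. v j * \<zeta> j)"
  have A_le: "A \<le> a * \<xi> i0"
    unfolding A_def u(2)[symmetric] sum_distrib_right
    using u(1) \<xi>_max by (intro sum_mono mult_left_mono) (auto simp: I'_def)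
  have B_le: "B \<le> a * \<zeta> j0"
    unfolding B_def v(2)[symmetric] sum_distrib_right
    using v(1) \<zeta>_max by (intro sum_mono mult_left_mono) (auto simp: J'_def)
  have "\<xi> i0 * B + \<zeta> j0 * A \<le> a * (\<xi> i0 * \<zeta> j0) + A * B / a"
  proof (cases "a = 0")
    case True
    then have "\<forall>i\<in>I'. u i = 0" "\<forall>j\<in>J'. v j = 0"
      using u v fin' by (simp_all add: sum_nonneg_eq_0_iff)
    then have "A = 0" "B = 0"
      by (simp_all add: A_def B_def)
    then show ?thesis using True by simp
  next
    case False
    moreover have "0 \<le> a"
      using u by (metis sum_nonneg)
    ultimately show ?thesis
      using A_le B_le by (intro mixed_product_le) auto
  qed
  moreover have "(\<Sum>i\<in>I. \<Sum>j\<in>J. \<pi> i j * (\<xi> i * \<zeta> j))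
      = \<pi> i0 j0 * (\<xi> i0 * \<zeta> j0) + \<xi> i0 * B + \<zeta> j0 * A + (\<Sum>i\<in>I'. \<Sum>j\<in>J'. \<pi> i j * (\<xi> i * \<zeta> j))"
    by (simp add: sum_I sum_J sum.distrib A_def B_def u_def v_def sum_distrib_left algebra_simps)
  moreover have "(\<Sum>i\<in>I'. \<Sum>j\<in>J'. (\<pi> i j + u i * v j / a) * (\<xi> i * \<zeta> j))
      = (\<Sum>i\<in>I'. \<Sum>j\<in>J'. \<pi> i j * (\<xi> i * \<zeta> j)) + A * B / a"
    by (simp add: A_def B_def sum.distrib sum_product sum_divide_distrib algebra_simps)
  ultimately show ?thesis
    using marginals unfolding I'_def J'_def
    by (intro exI[of _ "\<lambda>i j. \<pi> i j + u i * v j / a"]) (simp add: a_def algebra_simps)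
qed

lemma finite_has_max_value:
  fixes f :: "'a \<Rightarrow> 'b::linorder"
  assumes "finite A" "A \<noteq> {}"
  obtains a where "a \<in> A" "\<And>x. x \<in> A \<Longrightarrow> f x \<le> f a"
proof -
  have "Max (f ` A) \<in> f ` A"
    using assms by simp
  then obtain a where "a \<in> A" "f a = Max (f ` A)"
    by auto
  then show thesis using assms by (intro that) auto
qed

lemma bilinear_le_matching:
  fixes \<pi> :: "'i \<Rightarrow> 'j \<Rightarrow> real" and \<xi> :: "'i \<Rightarrow> real" and \<zeta> :: "'j \<Rightarrow> real"
  assumes "finite I" "finite J" "card I = card J"
    and "\<And>i j. i \<in> I \<Longrightarrow> j \<in> J \<Longrightarrow> 0 \<le> \<pi> i j"
    and "\<And>i. i \<in> I \<Longrightarrow> (\<Sum>j\<in>J. \<pi> i j) = w"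
    and "\<And>j. j \<in> J \<Longrightarrow> (\<Sum>i\<in>I. \<pi> i j) = w"
  shows "\<exists>\<sigma>. bij_betw \<sigma> I J \<and> (\<Sum>i\<in>I. \<Sum>j\<in>J. \<pi> i j * (\<xi> i * \<zeta> j)) \<le> w * (\<Sum>i\<in>I. \<xi> i * \<zeta> (\<sigma> i))"
  using assms
proof (induction "card I" arbitrary: I J \<pi>)
  case 0
  then show ?case by (auto simp: bij_betw_def)
next
  case (Suc n)
  then have "I \<noteq> {}" "J \<noteq> {}" by auto
  then obtain i0 j0 where i0: "i0 \<in> I" "\<And>i. i \<in> I \<Longrightarrow> \<xi> i \<le> \<xi> i0"
    and j0: "j0 \<in> J" "\<And>j. j \<in> J \<Longrightarrow> \<zeta> j \<le> \<zeta> j0"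
    using finite_has_max_value[of I \<xi>] finite_has_max_value[of J \<zeta>] Suc.prems(1,2) by metis
  obtain \<pi>' where \<pi>': "\<forall>i\<in>I - {i0}. \<forall>j\<in>J - {j0}. 0 \<le> \<pi>' i j"
    "\<forall>i\<in>I - {i0}. (\<Sum>j\<in>J - {j0}. \<pi>' i j) = w" "\<forall>j\<in>J - {j0}. (\<Sum>i\<in>I - {i0}. \<pi>' i j) = w"
    and reduce: "(\<Sum>i\<in>I. \<Sum>j\<in>J. \<pi> i j * (\<xi> i * \<zeta> j))
        \<le> w * (\<xi> i0 * \<zeta> j0) + (\<Sum>i\<in>I - {i0}. \<Sum>j\<in>J - {j0}. \<pi>' i j * (\<xi> i * \<zeta> j))"
    using rank_one_reduction[where \<xi>=\<xi> and \<zeta>=\<zeta> and \<pi>=\<pi>, OF Suc.prems(1,2) i0(1) j0(1) Suc.prems(4-6) i0(2) j0(2)] by blast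
  have "n = card (I - {i0})" "card (I - {i0}) = card (J - {j0})"
    using Suc.hyps(2) Suc.prems(3) i0(1) j0(1) Suc.prems(1,2) by simp_all
  then obtain \<sigma>' where \<sigma>': "bij_betw \<sigma>' (I - {i0}) (J - {j0})"
    "(\<Sum>i\<in>I - {i0}. \<Sum>j\<in>J - {j0}. \<pi>' i j * (\<xi> i * \<zeta> j)) \<le> w * (\<Sum>i\<in>I - {i0}. \<xi> i * \<zeta> (\<sigma>' i))"
    using Suc.hyps(1)[of "I - {i0}" "J - {j0}" \<pi>'] Suc.prems(1,2) \<pi>' by auto
  define \<sigma> where "\<sigma> = \<sigma>'(i0 := j0)"
  have "bij_betw \<sigma> (I - {i0}) (J - {j0})"
    using \<sigma>'(1) unfolding \<sigma>_def by (rule bij_betw_cong[THEN iffD1, rotated]) auto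
  then have "bij_betw \<sigma> ((I - {i0}) \<union> {i0}) ((J - {j0}) \<union> {\<sigma> i0})"
    by (intro notIn_Un_bij_betw) (auto simp: \<sigma>_def)
  then have bij: "bij_betw \<sigma> I J"
    using i0(1) j0(1) by (simp add: \<sigma>_def insert_absorb)
  have "(\<Sum>i\<in>I - {i0}. \<xi> i * \<zeta> (\<sigma> i)) = (\<Sum>i\<in>I - {i0}. \<xi> i * \<zeta> (\<sigma>' i))"
    by (rule sum.cong) (auto simp: \<sigma>_def)
  then have "w * (\<Sum>i\<in>I. \<xi> i * \<zeta> (\<sigma> i)) = w * (\<xi> i0 * \<zeta> j0) + w * (\<Sum>i\<in>I - {i0}. \<xi> i * \<zeta> (\<sigma>' i))"
    using Suc.prems(1) i0(1) by (simp add: sum.remove \<sigma>_def algebra_simps)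
  then show ?case
    using bij reduce \<sigma>'(2) by (intro exI[of _ \<sigma>]) (auto intro: order_trans)
qed

lemma transport_cost_expand:
  assumes "\<pi> \<in> couplings N"
  shows "transport_cost N \<xi> \<zeta> \<pi>
    = (\<Sum>i<N. (\<xi> i)^2) / real N + (\<Sum>j<N. (\<zeta> j)^2) / real N
      - 2 * (\<Sum>i<N. \<Sum>j<N. \<pi> i j * (\<xi> i * \<zeta> j))"
proof -
  have "transport_cost N \<xi> \<zeta> \<pi> = (\<Sum>i<N. \<Sum>j<N. \<pi> i j * (\<xi> i)^2)
      + (\<Sum>i<N. \<Sum>j<N. \<pi> i j * (\<zeta> j)^2) - 2 * (\<Sum>i<N. \<Sum>j<N. \<pi> i j * (\<xi> i * \<zeta> j))"
    unfolding transport_cost_def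
    by (simp add: power2_diff algebra_simps sum.distrib sum_subtractf sum_distrib_left)
  then show ?thesis
    using coupling_sum_left[OF assms] coupling_sum_right[OF assms] by simp
qed

lemma bilinear_perm_coupling:
  assumes "p permutes {..<N}"
  shows "(\<Sum>i<N. \<Sum>j<N. perm_coupling N p i j * (\<xi> i * \<zeta> j)) = (\<Sum>i<N. \<xi> i * \<zeta> (p i)) / real N"
proof -
  have "p i < N" if "i < N" for i
    using permutes_in_image[OF assms] that by simp
  then have "(\<Sum>j<N. perm_coupling N p i j * (\<xi> i * \<zeta> j)) = \<xi> i * \<zeta> (p i) / real N"
    if "i < N" for i
    using that by (simp add: perm_coupling_def if_distrib[of "\<lambda>x. x * _"] sum.delta' cong: if_cong)
  then show ?thesis
    by (simp add: sum_divide_distrib)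
qed

lemma exists_perm_coupling_cost_le:
  assumes "\<pi> \<in> couplings N"
  obtains p where "p permutes {..<N}"
    "transport_cost N \<xi> \<zeta> (perm_coupling N p) \<le> transport_cost N \<xi> \<zeta> \<pi>"
proof -
  obtain \<sigma> where \<sigma>: "bij_betw \<sigma> {..<N} {..<N}"
    "(\<Sum>i<N. \<Sum>j<N. \<pi> i j * (\<xi> i * \<zeta> j)) \<le> 1 / real N * (\<Sum>i<N. \<xi> i * \<zeta> (\<sigma> i))"
    using bilinear_le_matching[of "{..<N}" "{..<N}" \<pi> "1 / real N" \<xi> \<zeta>] assms
    by (auto simp: couplings_def)
  define p where "p i = (if i < N then \<sigma> i else i)" for i
  have "bij_betw p {..<N} {..<N}"
    using \<sigma>(1) by (rule bij_betw_cong[THEN iffD1, rotated]) (auto simp: p_def)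
  then have p: "p permutes {..<N}"
    by (rule bij_imp_permutes) (auto simp: p_def)
  have "(\<Sum>i<N. \<xi> i * \<zeta> (p i)) = (\<Sum>i<N. \<xi> i * \<zeta> (\<sigma> i))"
    by (auto simp: p_def intro!: sum.cong)
  then have "transport_cost N \<xi> \<zeta> (perm_coupling N p) \<le> transport_cost N \<xi> \<zeta> \<pi>"
    using \<sigma>(2) unfolding transport_cost_expand[OF assms] transport_cost_expand[OF perm_coupling_in_couplings[OF p]]
    by (simp add: bilinear_perm_coupling[OF p])
  then show thesis
    using p that by blast
qed

lemma transport_cost_Inf_nonneg: "0 \<le> Inf (transport_cost N \<xi> \<zeta> ` couplings N)"
  using couplings_nonempty transport_cost_nonneg by (intro cInf_greatest) auto

lemma W2_nonneg: "0 \<le> W2 N \<xi> \<zeta>"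
  unfolding W2_def using transport_cost_Inf_nonneg by simp

lemma W2_le_sqrt_transport_cost:
  assumes "\<pi> \<in> couplings N"
  shows "W2 N \<xi> \<zeta> \<le> sqrt (transport_cost N \<xi> \<zeta> \<pi>)"
proof -
  have "bdd_below (transport_cost N \<xi> \<zeta> ` couplings N)"
    using transport_cost_nonneg by (intro bdd_belowI[where m=0]) auto
  then show ?thesis
    unfolding W2_def using assms by (intro real_sqrt_le_mono cInf_lower) auto
qed

lemma W2_le_imp_perm_coupling:
  assumes "W2 N \<xi> \<zeta> \<le> R"
  obtains p where "p permutes {..<N}" "transport_cost N \<xi> \<zeta> (perm_coupling N p) \<le> R^2"
proof -
  let ?c = "\<lambda>p. transport_cost N \<xi> \<zeta> (perm_coupling N p)"
  define F where "F = {p. p permutes {..<N}}"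
  have "finite F" "id \<in> F"
    unfolding F_def using finite_permutations[of "{..<N}"] permutes_id[of "{..<N}"] by auto
  then obtain p where p: "p \<in> F" "\<And>q. q \<in> F \<Longrightarrow> ?c p \<le> ?c q"
    using finite_has_max_value[of F "\<lambda>p. - ?c p"] by (metis empty_iff neg_le_iff_le)
  have "?c p \<le> Inf (transport_cost N \<xi> \<zeta> ` couplings N)"
  proof (rule cInf_greatest)
    show "transport_cost N \<xi> \<zeta> ` couplings N \<noteq> {}"
      using couplings_nonempty by simp
    fix c assume "c \<in> transport_cost N \<xi> \<zeta> ` couplings N"
    then obtain \<pi> where "\<pi> \<in> couplings N" "c = transport_cost N \<xi> \<zeta> \<pi>" by auto
    then show "?c p \<le> c"
      using exists_perm_coupling_cost_le p(2) unfolding F_def by (metis mem_Collect_eq order_trans)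
  qed
  also have "\<dots> \<le> R^2"
    using assms unfolding W2_def by (rule sqrt_le_D)
  finally show thesis
    using p(1) that unfolding F_def by blast
qed

lemma W2_less_imp_coupling:
  assumes "W2 N \<xi> \<zeta> < R"
  obtains \<pi> where "\<pi> \<in> couplings N" "transport_cost N \<xi> \<zeta> \<pi> < R^2"
proof -
  have "Inf (transport_cost N \<xi> \<zeta> ` couplings N) < R^2"
    using assms unfolding W2_def by (meson not_le real_le_rsqrt)
  then have "\<exists>c\<in>transport_cost N \<xi> \<zeta> ` couplings N. c < R^2"
    using couplings_nonempty[of N] by (intro cInf_lessD) auto
  then show thesis
    using that by blast
qed

lemma continuous_on_x_ln_x: "continuous_on {0..} (\<lambda>x::real. x * ln x)"
proof -
  have "continuous (at x within {0..}) (\<lambda>x::real. x * ln x)" if "0 \<le> x" for x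
  proof (cases "x = 0")
    case True
    have "((\<lambda>x::real. x * ln x) \<longlongrightarrow> 0) (at_right 0)"
      by real_asymp
    then show ?thesis
      using True by (simp add: continuous_within at_within_Ici_at_right)
  next
    case False
    then have "isCont (\<lambda>x::real. x * ln x) x"
      using that by (auto intro!: continuous_intros)
    then show ?thesis
      by (rule continuous_at_imp_continuous_at_within)
  qed
  then show ?thesis
    by (simp add: continuous_on_eq_continuous_within)
qed

lemma ln_less_minus_one: "0 < x \<Longrightarrow> x \<noteq> 1 \<Longrightarrow> ln x < x - 1" for x :: real
  using ln_le_minus_one ln_eq_minus_one by fastforce

lemma x_ln_x_tangent:
  fixes x m :: real
  assumes "0 \<le> x" "0 < m"
  shows "x * ln m + (x - m) \<le> x * ln x"
    and "x \<noteq> m \<Longrightarrow> x * ln m + (x - m) < x * ln x"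
proof -
  show less: "x * ln m + (x - m) < x * ln x" if "x \<noteq> m"
  proof (cases "x = 0")
    case False
    then have x: "0 < x"
      using assms by simp
    have "ln (m / x) < m / x - 1"
      using x assms that by (intro ln_less_minus_one) auto
    then have "x * ln (m / x) < x * (m / x - 1)"
      using x by simp
    moreover have "x * ln (m / x) = x * ln m - x * ln x"
      using x assms by (simp add: ln_div right_diff_distrib)
    moreover have "x * (m / x - 1) = m - x"
      using x by (simp add: field_simps)
    ultimately show ?thesis
      by linarith
  qed (use assms in simp)
  show "x * ln m + (x - m) \<le> x * ln x"
    using less by (cases "x = m") auto
qed

lemma x_ln_x_midpoint_less:
  fixes a b :: real
  assumes "0 \<le> a" "0 \<le> b" "a \<noteq> b"
  shows "(a + b) / 2 * ln ((a + b) / 2) < (a * ln a + b * ln b) / 2"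
proof -
  define m where "m = (a + b) / 2"
  have m: "0 < m" "a \<noteq> m"
    using assms by (auto simp: m_def)
  have "(a * ln m + (a - m)) + (b * ln m + (b - m)) < a * ln a + b * ln b"
    using x_ln_x_tangent(2)[OF assms(1) m(1,2)] x_ln_x_tangent(1)[OF assms(2) m(1)] by linarith
  moreover have "(a * ln m + (a - m)) + (b * ln m + (b - m)) = 2 * (m * ln m)"
    by (simp add: m_def algebra_simps)
  ultimately show ?thesis
    by (simp add: m_def)
qed

lemma x_ln_x_midpoint_le:
  fixes a b :: real
  assumes "0 \<le> a" "0 \<le> b"
  shows "(a + b) / 2 * ln ((a + b) / 2) \<le> (a * ln a + b * ln b) / 2"
  using x_ln_x_midpoint_less[OF assms] by (cases "a = b") (auto simp: field_simps)

lemma x_ln_x_ge_minus_one: "0 \<le> x \<Longrightarrow> -1 \<le> x * ln (x::real)"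
  using x_ln_x_tangent(1)[of x 1] by simp

lemma x_ln_x_nonpos: "0 \<le> x \<Longrightarrow> x \<le> 1 \<Longrightarrow> x * ln (x::real) \<le> 0"
  by (cases "x = 0") (auto intro: mult_nonneg_nonpos)

lemma sum_x_ln_x_midpoint_less:
  fixes f g :: "'a \<Rightarrow> real"
  assumes "finite A" "\<And>x. x \<in> A \<Longrightarrow> 0 \<le> f x" "\<And>x. x \<in> A \<Longrightarrow> 0 \<le> g x" "a \<in> A" "f a \<noteq> g a"
  shows "(\<Sum>x\<in>A. (f x + g x) / 2 * ln ((f x + g x) / 2))
    < ((\<Sum>x\<in>A. f x * ln (f x)) + (\<Sum>x\<in>A. g x * ln (g x))) / 2"
proof -
  have "(\<Sum>x\<in>A. (f x + g x) / 2 * ln ((f x + g x) / 2)) < (\<Sum>x\<in>A. (f x * ln (f x) + g x * ln (g x)) / 2)"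
  proof (rule sum_strict_mono_ex1)
    show "\<forall>x\<in>A. (f x + g x) / 2 * ln ((f x + g x) / 2) \<le> (f x * ln (f x) + g x * ln (g x)) / 2"
      using assms(2,3) by (intro ballI x_ln_x_midpoint_le) auto
    show "\<exists>x\<in>A. (f x + g x) / 2 * ln ((f x + g x) / 2) < (f x * ln (f x) + g x * ln (g x)) / 2"
      using assms(2-5) by (intro bexI[OF _ assms(4)] x_ln_x_midpoint_less) auto
  qed (rule assms(1))
  then show ?thesis
    by (simp add: sum.distrib sum_divide_distrib[symmetric])
qed

lemma continuous_on_entry: "continuous_on S (\<lambda>\<pi>::nat \<Rightarrow> nat \<Rightarrow> real. \<pi> i j)"
  using continuous_on_product_then_coordinatewise[OF continuous_on_product_coordinates[of i]]
  by (rule continuous_on_subset) simp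

lemma compact_unit_box: "compact {\<pi>::nat \<Rightarrow> nat \<Rightarrow> real. \<forall>i j. \<pi> i j \<in> {0..1}}"
proof -
  have "compactin (product_topology (\<lambda>_. euclidean) UNIV) (PiE UNIV (\<lambda>_::nat. {0..1::real}))"
    by (subst compactin_PiE) auto
  then have "compact (PiE UNIV (\<lambda>_::nat. {0..1::real}))"
    by (metis compactin_euclidean_iff euclidean_product_topology)
  then have "compactin (product_topology (\<lambda>_. euclidean) UNIV)
      (PiE UNIV (\<lambda>_::nat. PiE UNIV (\<lambda>_::nat. {0..1::real})))"
    by (subst compactin_PiE) auto
  then have "compact (PiE UNIV (\<lambda>_::nat. PiE UNIV (\<lambda>_::nat. {0..1::real})))"
    by (metis compactin_euclidean_iff euclidean_product_topology)
  moreover have "PiE UNIV (\<lambda>_::nat. PiE UNIV (\<lambda>_::nat. {0..1::real}))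
      = {\<pi>. \<forall>i j. \<pi> i j \<in> {0..1}}"
    by (auto simp: PiE_def Pi_def)
  ultimately show ?thesis
    by simp
qed

lemma closed_couplings: "closed (couplings N)"
  unfolding couplings_def
  by (intro closed_Collect_conj closed_Collect_all closed_Collect_imp)
    (auto intro!: closed_Collect_le closed_Collect_eq continuous_on_sum continuous_on_entry)

lemma coupling_entry_le_one:
  assumes "\<pi> \<in> couplings N"
  shows "\<pi> i j \<le> 1"
proof (cases "i < N \<and> j < N")
  case True
  have "\<pi> i j \<le> (\<Sum>i'<N. \<pi> i' j)"
    using assms True by (intro member_le_sum) (auto simp: couplings_def)
  also have "\<dots> = 1 / real N"
    using assms True by (auto simp: couplings_def)
  also have "\<dots> \<le> 1"
    using True by simp
  finally show ?thesis .
qed (use assms in \<open>auto simp: couplings_def\<close>)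

lemma compact_couplings: "compact (couplings N)"
proof -
  have "\<pi> i j \<in> {0..1}" if "\<pi> \<in> couplings N" for \<pi> i j
    using that coupling_entry_le_one[OF that, of i j]
    by (cases "i < N \<and> j < N") (auto simp: couplings_def)
  then have "couplings N \<subseteq> {\<pi>. \<forall>i j. \<pi> i j \<in> {0..1}}"
    by blast
  then have "couplings N = {\<pi>. \<forall>i j. \<pi> i j \<in> {0..1}} \<inter> couplings N"
    by blast
  then show ?thesis
    using compact_Int_closed[OF compact_unit_box closed_couplings] by metis
qed

lemma continuous_on_sinkhorn_obj: "continuous_on (couplings N) (sinkhorn_obj N \<epsilon> \<xi> \<zeta>)"
proof -
  have entropy: "continuous_on (couplings N) (\<lambda>\<pi>. \<pi> i j * ln (\<pi> i j))" if "i < N" "j < N" for i j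
    using that by (intro continuous_on_compose2[OF continuous_on_x_ln_x continuous_on_entry])
      (auto simp: couplings_def)
  show ?thesis
    unfolding sinkhorn_obj_def transport_cost_def
    by (intro continuous_intros continuous_on_sum continuous_on_entry entropy) auto
qed

lemma couplings_midpoint:
  assumes "\<pi> \<in> couplings N" "\<pi>' \<in> couplings N"
  shows "(\<lambda>i j. (\<pi> i j + \<pi>' i j) / 2) \<in> couplings N"
  using assms unfolding couplings_def by (auto simp: sum.distrib sum_divide_distrib[symmetric])

lemma sinkhorn_obj_midpoint_less:
  assumes "0 < \<epsilon>" "\<pi> \<in> couplings N" "\<pi>' \<in> couplings N" "\<pi> \<noteq> \<pi>'"
  shows "sinkhorn_obj N \<epsilon> \<xi> \<zeta> (\<lambda>i j. (\<pi> i j + \<pi>' i j) / 2)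
    < (sinkhorn_obj N \<epsilon> \<xi> \<zeta> \<pi> + sinkhorn_obj N \<epsilon> \<xi> \<zeta> \<pi>') / 2"
proof -
  define m where "m i j = (\<pi> i j + \<pi>' i j) / 2" for i j
  define H where "H \<sigma> = (\<Sum>(i, j)\<in>{..<N} \<times> {..<N}. \<sigma> i j * ln (\<sigma> i j))" for \<sigma> :: "nat \<Rightarrow> nat \<Rightarrow> real"
  have obj: "sinkhorn_obj N \<epsilon> \<xi> \<zeta> \<sigma> = transport_cost N \<xi> \<zeta> \<sigma> + \<epsilon> * H \<sigma>" for \<sigma>
    unfolding sinkhorn_obj_def H_def by (simp add: sum.cartesian_product)
  have cost: "transport_cost N \<xi> \<zeta> m = (transport_cost N \<xi> \<zeta> \<pi> + transport_cost N \<xi> \<zeta> \<pi>') / 2"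
    unfolding transport_cost_def m_def by (simp add: sum.distrib sum_divide_distrib[symmetric] algebra_simps)
  have nonneg: "0 \<le> \<pi> i j" "0 \<le> \<pi>' i j" if "(i, j) \<in> {..<N} \<times> {..<N}" for i j
    using that assms(2,3) by (auto simp: couplings_def)
  obtain i j where ij: "(i, j) \<in> {..<N} \<times> {..<N}" "\<pi> i j \<noteq> \<pi>' i j"
  proof -
    obtain i j where "\<pi> i j \<noteq> \<pi>' i j"
      using assms(4) by (meson ext)
    moreover have "\<forall>i j. \<not> (i < N \<and> j < N) \<longrightarrow> \<pi> i j = 0 \<and> \<pi>' i j = 0"
      using assms(2,3) by (simp add: couplings_def)
    ultimately have "i < N \<and> j < N"
      by (cases "i < N \<and> j < N") auto
    then show thesis
      using \<open>\<pi> i j \<noteq> \<pi>' i j\<close> that by blast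
  qed
  have "H m < (H \<pi> + H \<pi>') / 2"
    unfolding H_def m_def case_prod_beta
    using ij nonneg by (intro sum_x_ln_x_midpoint_less[OF _ _ _ ij(1)]) auto
  then have "\<epsilon> * H m < \<epsilon> * ((H \<pi> + H \<pi>') / 2)"
    using assms(1) by simp
  then show ?thesis
    unfolding m_def[symmetric] obj cost by (simp add: field_simps)
qed

lemma sinkhorn_plan_minimiser:
  assumes "0 < \<epsilon>"
  shows sinkhorn_plan_in_couplings: "sinkhorn_plan N \<epsilon> \<xi> \<zeta> \<in> couplings N"
    and sinkhorn_plan_minimal:
      "\<pi> \<in> couplings N \<Longrightarrow> sinkhorn_obj N \<epsilon> \<xi> \<zeta> (sinkhorn_plan N \<epsilon> \<xi> \<zeta>) \<le> sinkhorn_obj N \<epsilon> \<xi> \<zeta> \<pi>"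
proof -
  let ?f = "sinkhorn_obj N \<epsilon> \<xi> \<zeta>"
  let ?minimal = "\<lambda>\<pi>. \<pi> \<in> couplings N \<and> (\<forall>\<pi>'\<in>couplings N. ?f \<pi> \<le> ?f \<pi>')"
  obtain \<pi>0 where \<pi>0: "?minimal \<pi>0"
    using continuous_attains_inf[OF compact_couplings couplings_nonempty continuous_on_sinkhorn_obj]
    by blast
  have unique: "\<pi> = \<pi>0" if "?minimal \<pi>" for \<pi>
  proof (rule ccontr)
    assume "\<pi> \<noteq> \<pi>0"
    then have "?f (\<lambda>i j. (\<pi> i j + \<pi>0 i j) / 2) < (?f \<pi> + ?f \<pi>0) / 2"
      using that \<pi>0 assms by (intro sinkhorn_obj_midpoint_less) auto
    moreover have "?f \<pi> \<le> ?f (\<lambda>i j. (\<pi> i j + \<pi>0 i j) / 2)" "?f \<pi>0 \<le> ?f (\<lambda>i j. (\<pi> i j + \<pi>0 i j) / 2)"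
      using that \<pi>0 couplings_midpoint[of \<pi> N \<pi>0] by auto
    ultimately show False
      by simp
  qed
  have "\<exists>!\<pi>. ?minimal \<pi>"
    using \<pi>0 unique by blast
  then have "?minimal (sinkhorn_plan N \<epsilon> \<xi> \<zeta>)"
    unfolding sinkhorn_plan_def by (rule theI')
  then show "sinkhorn_plan N \<epsilon> \<xi> \<zeta> \<in> couplings N"
    and "\<pi> \<in> couplings N \<Longrightarrow> ?f (sinkhorn_plan N \<epsilon> \<xi> \<zeta>) \<le> ?f \<pi>"
    by auto
qed

lemma W2_le_W2eps: "0 < \<epsilon> \<Longrightarrow> W2 N \<xi> \<zeta> \<le> W2eps N \<epsilon> \<xi> \<zeta>"
  unfolding W2eps_def using sinkhorn_plan_in_couplings by (rule W2_le_sqrt_transport_cost)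

lemma PNeps_subset_PN: "0 < \<epsilon> \<Longrightarrow> PNeps N \<epsilon> xil xiu R \<xi>0 \<subseteq> PN N xil xiu R \<xi>0"
  by (auto simp: PN_def PNeps_def intro: order_trans[OF W2_le_W2eps])

text \<open>The entropy term of any coupling lies in \<open>[-N\<^sup>2, 0]\<close>, so the Sinkhorn plan is
  \<open>\<epsilon> N\<^sup>2\<close>-optimal for the unregularised transport problem.\<close>

lemma W2eps_sq_le:
  assumes "0 < \<epsilon>" "\<pi> \<in> couplings N"
  shows "(W2eps N \<epsilon> \<xi> \<zeta>)^2 \<le> transport_cost N \<xi> \<zeta> \<pi> + \<epsilon> * real N ^ 2"
proof -
  define plan where "plan = sinkhorn_plan N \<epsilon> \<xi> \<zeta>"
  have plan: "plan \<in> couplings N"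
    unfolding plan_def using assms(1) by (rule sinkhorn_plan_in_couplings)
  have "-(real N ^ 2) \<le> (\<Sum>i<N. \<Sum>j<N. plan i j * ln (plan i j))"
  proof -
    have "(\<Sum>i<N. \<Sum>j<N. (-1::real)) \<le> (\<Sum>i<N. \<Sum>j<N. plan i j * ln (plan i j))"
      using plan by (intro sum_mono x_ln_x_ge_minus_one) (auto simp: couplings_def)
    then show ?thesis
      by (simp add: power2_eq_square)
  qed
  moreover have "(\<Sum>i<N. \<Sum>j<N. \<pi> i j * ln (\<pi> i j)) \<le> 0"
    using assms(2) coupling_entry_le_one[OF assms(2)]
    by (intro sum_nonpos x_ln_x_nonpos) (auto simp: couplings_def)
  moreover have "sinkhorn_obj N \<epsilon> \<xi> \<zeta> plan \<le> sinkhorn_obj N \<epsilon> \<xi> \<zeta> \<pi>"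
    unfolding plan_def using assms by (rule sinkhorn_plan_minimal)
  ultimately have "transport_cost N \<xi> \<zeta> plan \<le> transport_cost N \<xi> \<zeta> \<pi> + \<epsilon> * real N ^ 2"
    using assms(1) unfolding sinkhorn_obj_def
    by (smt (verit, best) mult_left_mono mult_minus_right mult_nonneg_nonpos less_eq_real_def)
  then show ?thesis
    using transport_cost_nonneg[OF plan] by (simp add: W2eps_def plan_def)
qed

lemma exp_neg_mult_diff_le:
  fixes a b r :: real
  assumes "0 \<le> a" "0 \<le> b" "0 \<le> r"
  shows "\<bar>exp (- a * r) - exp (- b * r)\<bar> \<le> \<bar>a - b\<bar> * r"
proof -
  have *: "\<bar>exp (- a * r) - exp (- b * r)\<bar> \<le> (b - a) * r" if "0 \<le> a" "a \<le> b" for a b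
  proof -
    have "exp (- b * r) = exp (- a * r) * exp (- ((b - a) * r))"
      by (simp add: mult_exp_exp algebra_simps)
    then have "exp (- a * r) - exp (- b * r) = exp (- a * r) * (1 - exp (- ((b - a) * r)))"
      by (simp add: algebra_simps)
    moreover have "0 \<le> 1 - exp (- ((b - a) * r))" "1 - exp (- ((b - a) * r)) \<le> (b - a) * r"
      using that assms(3) exp_ge_add_one_self[of "- ((b - a) * r)"] by auto
    moreover have "exp (- a * r) \<le> 1"
      using that assms(3) by simp
    ultimately have "exp (- a * r) * (1 - exp (- ((b - a) * r))) \<le> 1 * ((b - a) * r)"
      "0 \<le> exp (- a * r) * (1 - exp (- ((b - a) * r)))"
      by (intro mult_mono, simp_all)
    then show ?thesis
      using \<open>exp (- a * r) - exp (- b * r) = _\<close> by simp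
  qed
  show ?thesis
    using *[of a b] *[of b a] assms by (cases "a \<le> b") (auto simp: abs_minus_commute)
qed

lemma Kemp_nonneg: "0 \<le> Kemp N \<xi> x x'"
  unfolding Kemp_def by (simp add: sum_nonneg)

lemma Kemp_le_one:
  assumes "\<forall>k<N. 0 \<le> \<xi> k"
  shows "Kemp N \<xi> x x' \<le> 1"
proof -
  have "(\<Sum>k<N. exp (- \<xi> k * (norm (x - x'))^2)) \<le> (\<Sum>k<N. 1)"
    using assms by (intro sum_mono) simp
  then show ?thesis
    unfolding Kemp_def by (cases "N = 0") (auto simp: divide_le_eq_1)
qed

lemma Kemp_lipschitz:
  assumes "\<forall>k<N. 0 \<le> \<xi> k \<and> 0 \<le> z k \<and> \<bar>z k - \<xi> k\<bar> \<le> \<delta>" "0 \<le> \<delta>"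
  shows "\<bar>Kemp N z x x' - Kemp N \<xi> x x'\<bar> \<le> \<delta> * (norm (x - x'))^2"
proof -
  let ?r = "(norm (x - x'))^2"
  have "\<bar>(\<Sum>k<N. exp (- z k * ?r)) - (\<Sum>k<N. exp (- \<xi> k * ?r))\<bar>
      \<le> (\<Sum>k<N. \<bar>exp (- z k * ?r) - exp (- \<xi> k * ?r)\<bar>)"
    by (simp only: sum_subtractf[symmetric] sum_abs)
  also have "\<dots> \<le> (\<Sum>k<N. \<delta> * ?r)"
  proof (rule sum_mono)
    fix k assume "k \<in> {..<N}"
    then have "\<bar>exp (- z k * ?r) - exp (- \<xi> k * ?r)\<bar> \<le> \<bar>z k - \<xi> k\<bar> * ?r" "\<bar>z k - \<xi> k\<bar> \<le> \<delta>"
      using assms(1) exp_neg_mult_diff_le[of "z k" "\<xi> k" ?r] by auto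
    then show "\<bar>exp (- z k * ?r) - exp (- \<xi> k * ?r)\<bar> \<le> \<delta> * ?r"
      by (meson mult_right_mono order_trans zero_le_power2)
  qed
  finally have "\<bar>(\<Sum>k<N. exp (- z k * ?r)) - (\<Sum>k<N. exp (- \<xi> k * ?r))\<bar> \<le> real N * (\<delta> * ?r)"
    by simp
  then show ?thesis
    using assms(2) unfolding Kemp_def
    by (cases "N = 0") (auto simp: diff_divide_distrib[symmetric] abs_divide divide_le_eq mult.commute)
qed

lemma (in prob_space) abs_integral_diff_le:
  fixes f g :: "'a \<Rightarrow> real"
  assumes "integrable M f" "integrable M g" "AE x in M. \<bar>f x - g x\<bar> \<le> c"
  shows "\<bar>(\<integral>x. f x \<partial>M) - (\<integral>x. g x \<partial>M)\<bar> \<le> c"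
proof -
  have "AE x in M. f x - g x \<le> c" "AE x in M. g x - f x \<le> c"
    using assms(3) by (auto elim!: eventually_mono)
  then have "(\<integral>x. f x - g x \<partial>M) \<le> c" "(\<integral>x. g x - f x \<partial>M) \<le> c"
    using assms(1,2) by (intro integral_le_const; simp)+
  then show ?thesis
    using Bochner_Integration.integral_diff[OF assms(1,2)] Bochner_Integration.integral_diff[OF assms(2,1)] by simp
qed



lemma square_convex_comb_le:
  fixes a b c t :: real
  assumes "0 \<le> t" "t \<le> 1"
  shows "((1 - t) * a + t * b - c)^2 \<le> (1 - t) * (a - c)^2 + t * (b - c)^2"
proof -
  have "(1 - t) * (a - c)^2 + t * (b - c)^2 - ((1 - t) * a + t * b - c)^2 = t * (1 - t) * (a - b)^2"
    by (simp add: power2_eq_square algebra_simps)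
  moreover have "0 \<le> t * (1 - t) * (a - b)^2"
    using assms by simp
  ultimately show ?thesis
    by simp
qed

lemma transport_cost_convex_comb:
  assumes "\<pi> \<in> couplings N" "0 \<le> t" "t \<le> 1"
  shows "transport_cost N (\<lambda>k. (1 - t) * \<xi> k + t * \<xi>' k) \<zeta> \<pi>
    \<le> (1 - t) * transport_cost N \<xi> \<zeta> \<pi> + t * transport_cost N \<xi>' \<zeta> \<pi>"
proof -
  have "transport_cost N (\<lambda>k. (1 - t) * \<xi> k + t * \<xi>' k) \<zeta> \<pi>
      \<le> (\<Sum>i<N. \<Sum>j<N. \<pi> i j * ((1 - t) * (\<xi> i - \<zeta> j)^2 + t * (\<xi>' i - \<zeta> j)^2))"
    unfolding transport_cost_def using assms
    by (intro sum_mono mult_left_mono square_convex_comb_le) (auto simp: couplings_def)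
  also have "\<dots> = (\<Sum>i<N. \<Sum>j<N. (1 - t) * (\<pi> i j * (\<xi> i - \<zeta> j)^2) + t * (\<pi> i j * (\<xi>' i - \<zeta> j)^2))"
    by (simp add: algebra_simps)
  also have "\<dots> = (1 - t) * transport_cost N \<xi> \<zeta> \<pi> + t * transport_cost N \<xi>' \<zeta> \<pi>"
    unfolding transport_cost_def by (simp add: sum.distrib sum_distrib_left)
  finally show ?thesis .
qed

lemma clamp_dist_le:
  fixes lo hi s x :: real
  assumes "lo \<le> s" "s \<le> hi"
  shows "(max lo (min hi x) - x)^2 \<le> (s - x)^2"
proof -
  have "\<bar>max lo (min hi x) - x\<bar> \<le> \<bar>s - x\<bar>"
    using assms by (auto simp: abs_if max_def min_def)
  then show ?thesis
    by (simp add: abs_le_square_iff)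
qed

lemma convex_comb_in_interval:
  fixes lo a hi b t :: real
  assumes "a \<in> {lo..hi}" "b \<in> {lo..hi}" "0 \<le> t" "t \<le> 1"
  shows "(1 - t) * a + t * b \<in> {lo..hi}" "\<bar>(1 - t) * a + t * b - a\<bar> \<le> t * (hi - lo)"
proof -
  have "(1 - t) * a + t * b - lo = (1 - t) * (a - lo) + t * (b - lo)"
    "hi - ((1 - t) * a + t * b) = (1 - t) * (hi - a) + t * (hi - b)"
    by (simp_all add: algebra_simps)
  moreover have "0 \<le> (1 - t) * (a - lo) + t * (b - lo)" "0 \<le> (1 - t) * (hi - a) + t * (hi - b)"
    using assms by simp_all
  ultimately show "(1 - t) * a + t * b \<in> {lo..hi}"
    unfolding atLeastAtMost_iff by linarith
  have "(1 - t) * a + t * b - a = t * (b - a)"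
    by (simp add: algebra_simps)
  then have "\<bar>(1 - t) * a + t * b - a\<bar> = t * \<bar>b - a\<bar>"
    using assms(3) by (simp add: abs_mult)
  also have "\<dots> \<le> t * (hi - lo)"
    using assms by (intro mult_left_mono) (auto simp: abs_le_iff)
  finally show "\<bar>(1 - t) * a + t * b - a\<bar> \<le> t * (hi - lo)" .
qed

text \<open>Clamping the reference atoms into \<open>[lo, hi]\<close> moves them by no more than any measure
  supported in \<open>[lo, hi]\<close> is away from them.\<close>

lemma clamped_perm_coupling_cost_less:
  assumes p: "p permutes {..<N}"
    and \<xi>s: "\<forall>k<N. \<xi>s k \<in> {lo..hi}" "W2 N \<xi>s \<zeta> < R"
  shows "transport_cost N (\<lambda>i. max lo (min hi (\<zeta> (p i)))) \<zeta> (perm_coupling N p) < R^2"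
proof -
  obtain \<pi> where \<pi>: "\<pi> \<in> couplings N" "transport_cost N \<xi>s \<zeta> \<pi> < R^2"
    using W2_less_imp_coupling[OF \<xi>s(2)] by blast
  define d where "d j = (max lo (min hi (\<zeta> j)) - \<zeta> j)^2" for j
  have "transport_cost N (\<lambda>i. max lo (min hi (\<zeta> (p i)))) \<zeta> (perm_coupling N p) = (\<Sum>i<N. d (p i)) / real N"
    unfolding transport_cost_perm_coupling[OF p] d_def ..
  also have "\<dots> = (\<Sum>j<N. d j) / real N"
    using sum.permute[OF p, of d] by simp
  also have "\<dots> = (\<Sum>i<N. \<Sum>j<N. \<pi> i j * d j)"
    using coupling_sum_right[OF \<pi>(1)] by simp
  also have "\<dots> \<le> transport_cost N \<xi>s \<zeta> \<pi>"
    unfolding transport_cost_def d_def using \<pi>(1) \<xi>s(1)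
    by (intro sum_mono mult_left_mono clamp_dist_le) (auto simp: couplings_def)
  finally show ?thesis
    using \<pi>(2) by simp
qed

text \<open>Feasible points can be approximated by strictly feasible ones: move a small step
  from \<open>\<xi>\<close> towards the clamped reference atoms, matched along an optimal permutation for \<open>\<xi>\<close>.\<close>

lemma exists_strictly_feasible_near:
  assumes \<xi>: "\<forall>k<N. \<xi> k \<in> {lo..hi}" "W2 N \<xi> \<zeta> \<le> R"
    and \<xi>s: "\<forall>k<N. \<xi>s k \<in> {lo..hi}" "W2 N \<xi>s \<zeta> < R"
    and "lo \<le> hi" "0 < \<delta>"
  obtains z \<pi> where "\<forall>k<N. z k \<in> {lo..hi}" "\<forall>k<N. \<bar>z k - \<xi> k\<bar> \<le> \<delta>"
    "\<pi> \<in> couplings N" "transport_cost N z \<zeta> \<pi> < R^2"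
proof -
  obtain p where p: "p permutes {..<N}" "transport_cost N \<xi> \<zeta> (perm_coupling N p) \<le> R^2"
    using W2_le_imp_perm_coupling[OF \<xi>(2)] by blast
  define q where "q i = max lo (min hi (\<zeta> (p i)))" for i
  have q_cost: "transport_cost N q \<zeta> (perm_coupling N p) < R^2"
    unfolding q_def by (rule clamped_perm_coupling_cost_less[OF p(1) \<xi>s])
  define t where "t = \<delta> / (\<delta> + (hi - lo))"
  have t: "0 < t" "t \<le> 1" "t * (hi - lo) \<le> \<delta>"
    using assms(5,6) by (auto simp: t_def field_simps)
  define z where "z k = (1 - t) * \<xi> k + t * q k" for k
  have "z k \<in> {lo..hi} \<and> \<bar>z k - \<xi> k\<bar> \<le> \<delta>" if "k < N" for k
  proof -
    have "\<xi> k \<in> {lo..hi}" "q k \<in> {lo..hi}"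
      using \<xi>(1) that assms(5) by (auto simp: q_def)
    from convex_comb_in_interval[OF this less_imp_le[OF t(1)] t(2)] show ?thesis
      using t(3) unfolding z_def by linarith
  qed
  moreover have "transport_cost N z \<zeta> (perm_coupling N p) < R^2"
  proof -
    have "transport_cost N z \<zeta> (perm_coupling N p)
        \<le> (1 - t) * transport_cost N \<xi> \<zeta> (perm_coupling N p) + t * transport_cost N q \<zeta> (perm_coupling N p)"
      unfolding z_def using perm_coupling_in_couplings[OF p(1)] t by (intro transport_cost_convex_comb) auto
    also have "\<dots> < (1 - t) * R^2 + t * R^2"
      using p(2) q_cost t by (intro add_le_less_mono mult_left_mono mult_strict_left_mono) auto
    finally show ?thesis
      by (simp add: algebra_simps)
  qed
  ultimately show thesis
    using that perm_coupling_in_couplings[OF p(1)] by blast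
qed

lemma W2eps_less_for_small_eps:
  assumes "\<pi> \<in> couplings N" "transport_cost N z \<zeta> \<pi> < R^2" "0 \<le> R"
  obtains \<epsilon>0 where "0 < \<epsilon>0" "\<And>\<epsilon>. 0 < \<epsilon> \<Longrightarrow> \<epsilon> < \<epsilon>0 \<Longrightarrow> W2eps N \<epsilon> z \<zeta> < R"
proof
  define \<epsilon>0 where "\<epsilon>0 = (R^2 - transport_cost N z \<zeta> \<pi>) / (real N ^ 2 + 1)"
  have N_pos: "0 < real N ^ 2 + 1"
    by (simp add: add_nonneg_pos)
  then show "0 < \<epsilon>0"
    unfolding \<epsilon>0_def using assms(2) by (intro divide_pos_pos) auto
  fix \<epsilon> :: real
  assume \<epsilon>: "0 < \<epsilon>" "\<epsilon> < \<epsilon>0"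
  have "(W2eps N \<epsilon> z \<zeta>)^2 \<le> transport_cost N z \<zeta> \<pi> + \<epsilon> * (real N ^ 2 + 1)"
    using W2eps_sq_le[OF \<epsilon>(1) assms(1), of z \<zeta>] \<epsilon>(1) by (simp add: algebra_simps)
  also have "\<dots> < transport_cost N z \<zeta> \<pi> + \<epsilon>0 * (real N ^ 2 + 1)"
    using \<epsilon>(2) N_pos by (intro add_strict_left_mono mult_strict_right_mono)
  also have "\<dots> = R^2"
    unfolding \<epsilon>0_def using N_pos by simp
  finally show "W2eps N \<epsilon> z \<zeta> < R"
    using assms(3) by (rule power2_less_imp_less)
qed

lemma continuous_on_Kemp:
  "continuous_on UNIV (\<lambda>pq :: ('a::real_normed_vector \<times> real) \<times> ('a \<times> real).
     Kemp N \<xi> (fst (fst pq)) (fst (snd pq)))"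
  unfolding Kemp_def divide_inverse by (intro continuous_intros)

locale bounded_labelled_data =
  fixes P :: "('a::euclidean_space \<times> real) measure" and B :: real
  assumes prob_P: "prob_space P" and sets_P: "sets P = sets borel"
    and labels_bounded: "AE p in P. \<bar>snd p\<bar> \<le> 1"
    and features_bounded: "AE p in P. norm (fst p) \<le> B"
begin

sublocale PP: pair_prob_space P P
  using prob_P by (simp add: pair_prob_space_def pair_sigma_finite_def prob_space_imp_sigma_finite)

lemma sets_PP: "sets (P \<Otimes>\<^sub>M P) = sets (borel :: (('a \<times> real) \<times> ('a \<times> real)) measure)"
  using sets_pair_measure_cong[OF sets_P sets_P] by (metis borel_prod)

lemma integrable_PP_if_continuous_bounded:
  fixes f :: "('a \<times> real) \<times> ('a \<times> real) \<Rightarrow> real"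
  assumes "continuous_on UNIV f" "AE pq in P \<Otimes>\<^sub>M P. \<bar>f pq\<bar> \<le> c"
  shows "integrable (P \<Otimes>\<^sub>M P) f"
proof (rule PP.integrable_const_bound)
  show "f \<in> borel_measurable (P \<Otimes>\<^sub>M P)"
    using measurable_cong_sets[OF sets_PP refl] borel_measurable_continuous_onI[OF assms(1)] by blast
qed (use assms(2) in simp)

lemma AE_PP_bounded:
  "AE pq in P \<Otimes>\<^sub>M P. \<bar>snd (fst pq)\<bar> \<le> 1 \<and> \<bar>snd (snd pq)\<bar> \<le> 1
     \<and> (norm (fst (fst pq) - fst (snd pq)))^2 \<le> (2 * B)^2"
proof -
  define Q where "Q p \<longleftrightarrow> \<bar>snd p\<bar> \<le> 1 \<and> norm (fst p) \<le> B" for p :: "'a \<times> real"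
  have "closed {pq :: ('a \<times> real) \<times> ('a \<times> real). Q (fst pq) \<and> Q (snd pq)}"
    unfolding Q_def by (intro closed_Collect_conj closed_Collect_le continuous_intros)
  then have "{pq \<in> space (P \<Otimes>\<^sub>M P). Q (fst pq) \<and> Q (snd pq)} \<in> sets (P \<Otimes>\<^sub>M P)"
    using sets_PP sets_eq_imp_space_eq[OF sets_PP] by simp
  moreover have "AE p in P. Q p"
    using labels_bounded features_bounded unfolding Q_def by eventually_elim simp
  then have "AE p in P. AE p' in P. Q (fst (p, p')) \<and> Q (snd (p, p'))"
    by (auto elim!: eventually_mono)
  ultimately have "AE pq in P \<Otimes>\<^sub>M P. Q (fst pq) \<and> Q (snd pq)"
    by (rule PP.AE_pair_measure)
  then show ?thesis
  proof (rule eventually_mono)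
    fix pq :: "('a \<times> real) \<times> ('a \<times> real)"
    assume "Q (fst pq) \<and> Q (snd pq)"
    then have "norm (fst (fst pq) - fst (snd pq)) \<le> 2 * B"
      using norm_triangle_ineq4[of "fst (fst pq)" "fst (snd pq)"] unfolding Q_def by simp
    then have "(norm (fst (fst pq) - fst (snd pq)))^2 \<le> (2 * B)^2"
      by (rule power_mono) simp
    then show "\<bar>snd (fst pq)\<bar> \<le> 1 \<and> \<bar>snd (snd pq)\<bar> \<le> 1 \<and> (norm (fst (fst pq) - fst (snd pq)))^2 \<le> (2 * B)^2"
      using \<open>Q (fst pq) \<and> Q (snd pq)\<close> unfolding Q_def by blast
  qed
qed


definition kernel_energy :: "nat \<Rightarrow> (nat \<Rightarrow> real) \<Rightarrow> real" where
  "kernel_energy N \<xi> = (\<integral>pq. (Kemp N \<xi> (fst (fst pq)) (fst (snd pq)))^2 \<partial>(P \<Otimes>\<^sub>M P))"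

lemma Egamma_eq: "Egamma P N \<gamma> \<xi> = E0 P N \<xi> - kernel_energy N \<xi> / \<gamma>"
  unfolding Egamma_def kernel_energy_def by simp

lemma integrable_E0_integrand:
  assumes "\<forall>k<N. 0 \<le> \<xi> k"
  shows "integrable (P \<Otimes>\<^sub>M P) (\<lambda>pq. snd (fst pq) * snd (snd pq) * Kemp N \<xi> (fst (fst pq)) (fst (snd pq)))"
proof (rule integrable_PP_if_continuous_bounded)
  show "continuous_on UNIV (\<lambda>pq. snd (fst pq) * snd (snd pq) * Kemp N \<xi> (fst (fst pq)) (fst (snd pq)))"
    by (intro continuous_intros continuous_on_Kemp)
  show "AE pq in P \<Otimes>\<^sub>M P. \<bar>snd (fst pq) * snd (snd pq) * Kemp N \<xi> (fst (fst pq)) (fst (snd pq))\<bar> \<le> 1"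
    using AE_PP_bounded
  proof eventually_elim
    case (elim pq)
    then show ?case
      using Kemp_nonneg Kemp_le_one[OF assms]
      by (auto simp: abs_mult abs_of_nonneg[OF Kemp_nonneg] intro!: mult_le_one)
  qed
qed

lemma integrable_kernel_energy_integrand:
  assumes "\<forall>k<N. 0 \<le> \<xi> k"
  shows "integrable (P \<Otimes>\<^sub>M P) (\<lambda>pq. (Kemp N \<xi> (fst (fst pq)) (fst (snd pq)))^2)"
proof (rule integrable_PP_if_continuous_bounded)
  show "continuous_on UNIV (\<lambda>pq :: ('a \<times> real) \<times> ('a \<times> real). (Kemp N \<xi> (fst (fst pq)) (fst (snd pq)))^2)"
    using continuous_on_Kemp by (rule continuous_on_power)
  show "AE pq in P \<Otimes>\<^sub>M P. \<bar>(Kemp N \<xi> (fst (fst pq)) (fst (snd pq)))^2\<bar> \<le> 1"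
    using Kemp_nonneg Kemp_le_one[OF assms] by (intro AE_I2) (auto intro!: power_le_one)
qed

lemma E0_abs_le_one:
  assumes "\<forall>k<N. 0 \<le> \<xi> k"
  shows "\<bar>E0 P N \<xi>\<bar> \<le> 1"
proof -
  have "AE pq in P \<Otimes>\<^sub>M P. \<bar>snd (fst pq) * snd (snd pq) * Kemp N \<xi> (fst (fst pq)) (fst (snd pq)) - 0\<bar> \<le> 1"
    using AE_PP_bounded
  proof eventually_elim
    case (elim pq)
    then show ?case
      using Kemp_nonneg Kemp_le_one[OF assms]
      by (auto simp: abs_mult abs_of_nonneg[OF Kemp_nonneg] intro!: mult_le_one)
  qed
  then show ?thesis
    using PP.abs_integral_diff_le[OF integrable_E0_integrand[OF assms] integrable_zero] by (simp add: E0_def)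
qed

lemma kernel_energy_nonneg: "0 \<le> kernel_energy N \<xi>"
  unfolding kernel_energy_def by simp

lemma kernel_energy_le_one:
  assumes "\<forall>k<N. 0 \<le> \<xi> k"
  shows "kernel_energy N \<xi> \<le> 1"
  unfolding kernel_energy_def
  by (intro PP.integral_le_const[OF integrable_kernel_energy_integrand[OF assms]] AE_I2
      power_le_one Kemp_nonneg Kemp_le_one[OF assms])

lemma E0_lipschitz:
  assumes "\<forall>k<N. 0 \<le> \<xi> k \<and> 0 \<le> z k \<and> \<bar>z k - \<xi> k\<bar> \<le> \<delta>" "0 \<le> \<delta>"
  shows "\<bar>E0 P N z - E0 P N \<xi>\<bar> \<le> \<delta> * (2 * B)^2"
proof -
  have "\<forall>k<N. 0 \<le> z k" "\<forall>k<N. 0 \<le> \<xi> k"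
    using assms(1) by auto
  note integrable = integrable_E0_integrand[OF this(1)] integrable_E0_integrand[OF this(2)]
  have "AE pq in P \<Otimes>\<^sub>M P. \<bar>snd (fst pq) * snd (snd pq) * Kemp N z (fst (fst pq)) (fst (snd pq))
      - snd (fst pq) * snd (snd pq) * Kemp N \<xi> (fst (fst pq)) (fst (snd pq))\<bar> \<le> \<delta> * (2 * B)^2"
    using AE_PP_bounded
  proof eventually_elim
    case (elim pq)
    let ?d = "Kemp N z (fst (fst pq)) (fst (snd pq)) - Kemp N \<xi> (fst (fst pq)) (fst (snd pq))"
    have "\<bar>?d\<bar> \<le> \<delta> * (2 * B)^2"
      using Kemp_lipschitz[OF assms] elim mult_left_mono[OF _ assms(2)] by (meson order_trans)
    moreover have "\<bar>snd (fst pq) * snd (snd pq)\<bar> \<le> 1"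
      using elim by (simp add: abs_mult mult_le_one)
    ultimately have "\<bar>snd (fst pq) * snd (snd pq) * ?d\<bar> \<le> 1 * (\<delta> * (2 * B)^2)"
      unfolding abs_mult[of _ ?d] by (intro mult_mono) auto
    then show ?case
      by (simp add: algebra_simps)
  qed
  then show ?thesis
    unfolding E0_def by (rule PP.abs_integral_diff_le[OF integrable])
qed

lemma kernel_energy_lipschitz:
  assumes "\<forall>k<N. 0 \<le> \<xi> k \<and> 0 \<le> z k \<and> \<bar>z k - \<xi> k\<bar> \<le> \<delta>" "0 \<le> \<delta>"
  shows "\<bar>kernel_energy N z - kernel_energy N \<xi>\<bar> \<le> 2 * (\<delta> * (2 * B)^2)"
proof -
  have "\<forall>k<N. 0 \<le> z k" "\<forall>k<N. 0 \<le> \<xi> k"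
    using assms(1) by auto
  note bounds = this
  have "AE pq in P \<Otimes>\<^sub>M P. \<bar>(Kemp N z (fst (fst pq)) (fst (snd pq)))^2
      - (Kemp N \<xi> (fst (fst pq)) (fst (snd pq)))^2\<bar> \<le> 2 * (\<delta> * (2 * B)^2)"
    using AE_PP_bounded
  proof eventually_elim
    case (elim pq)
    define a b where "a = Kemp N z (fst (fst pq)) (fst (snd pq))" and "b = Kemp N \<xi> (fst (fst pq)) (fst (snd pq))"
    have "\<bar>a - b\<bar> \<le> \<delta> * (2 * B)^2"
      unfolding a_def b_def
      using Kemp_lipschitz[OF assms] elim mult_left_mono[OF _ assms(2)] by (meson order_trans)
    moreover have "\<bar>a + b\<bar> \<le> 2"
      using Kemp_nonneg Kemp_le_one[OF bounds(1)] Kemp_le_one[OF bounds(2)] unfolding a_def b_def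
      by (smt (verit))
    ultimately have "\<bar>a + b\<bar> * \<bar>a - b\<bar> \<le> 2 * (\<delta> * (2 * B)^2)"
      by (intro mult_mono) auto
    then show ?case
      by (simp add: a_def b_def power2_eq_square algebra_simps abs_mult[symmetric])
  qed
  then show ?thesis
    unfolding kernel_energy_def
    by (rule PP.abs_integral_diff_le[OF integrable_kernel_energy_integrand[OF bounds(1)]
          integrable_kernel_energy_integrand[OF bounds(2)]])
qed

lemma Egamma_lipschitz:
  assumes "\<forall>k<N. 0 \<le> \<xi> k \<and> 0 \<le> z k \<and> \<bar>z k - \<xi> k\<bar> \<le> \<delta>" "0 \<le> \<delta>" "0 < \<gamma>"
  shows "\<bar>Egamma P N \<gamma> z - Egamma P N \<gamma> \<xi>\<bar> \<le> \<delta> * (2 * B)^2 * (1 + 2 / \<gamma>)"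
proof -
  have "\<bar>kernel_energy N z / \<gamma> - kernel_energy N \<xi> / \<gamma>\<bar> \<le> 2 * (\<delta> * (2 * B)^2) / \<gamma>"
    using kernel_energy_lipschitz[OF assms(1,2)] assms(3)
    by (simp add: diff_divide_distrib[symmetric] abs_divide divide_right_mono)
  then show ?thesis
    using E0_lipschitz[OF assms(1,2)] unfolding Egamma_eq by (simp add: algebra_simps)
qed


lemma Egamma_lower_bound_near:
  assumes "0 < \<gamma>"
  obtains \<delta> where "0 < \<delta>"
    "\<And>\<xi> z. \<forall>k<N. 0 \<le> \<xi> k \<and> 0 \<le> z k \<and> \<bar>z k - \<xi> k\<bar> \<le> \<delta> \<Longrightarrow> Egamma P N \<gamma> \<xi> - 1 / \<gamma> \<le> Egamma P N \<gamma> z"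
proof
  define L where "L = (2 * B)^2 * (1 + 2 / \<gamma>)"
  have L: "0 \<le> L"
    using assms by (simp add: L_def)
  define \<delta> where "\<delta> = 1 / (\<gamma> * L + 1)"
  show \<delta>: "0 < \<delta>"
    using L assms by (simp add: \<delta>_def add_nonneg_pos)
  have "\<delta> * L = 1 / \<gamma> * (\<gamma> * L / (\<gamma> * L + 1))"
    using assms by (simp add: \<delta>_def)
  also have "\<dots> \<le> 1 / \<gamma> * 1"
    using mult_nonneg_nonneg[OF less_imp_le[OF assms] L] assms by (intro mult_left_mono) auto
  finally have "\<delta> * L \<le> 1 / \<gamma>"
    by simp
  then show "Egamma P N \<gamma> \<xi> - 1 / \<gamma> \<le> Egamma P N \<gamma> z"
    if "\<forall>k<N. 0 \<le> \<xi> k \<and> 0 \<le> z k \<and> \<bar>z k - \<xi> k\<bar> \<le> \<delta>" for \<xi> z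
    using Egamma_lipschitz[OF that less_imp_le[OF \<delta>] assms] unfolding L_def by (simp add: mult.assoc)
qed

lemma E0_gap_le:
  assumes "\<forall>k<N. 0 \<le> \<xi>1 k" "\<forall>k<N. 0 \<le> \<xi>2 k" "0 < \<gamma>"
    and "Egamma P N \<gamma> \<xi>2 \<le> Egamma P N \<gamma> \<xi>1" "Egamma P N \<gamma> \<xi>1 \<le> Egamma P N \<gamma> \<xi>2 + a"
  shows "\<bar>E0 P N \<xi>1 - E0 P N \<xi>2\<bar> \<le> a + 1 / \<gamma>"
proof -
  have "\<bar>kernel_energy N \<xi>1 - kernel_energy N \<xi>2\<bar> \<le> 1"
    using kernel_energy_nonneg[of N \<xi>1] kernel_energy_nonneg[of N \<xi>2]
      kernel_energy_le_one[OF assms(1)] kernel_energy_le_one[OF assms(2)] by (simp add: abs_le_iff)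
  then have "\<bar>kernel_energy N \<xi>1 / \<gamma> - kernel_energy N \<xi>2 / \<gamma>\<bar> \<le> 1 / \<gamma>"
    using assms(3) by (simp add: diff_divide_distrib[symmetric] abs_divide divide_right_mono)
  then show ?thesis
    using assms(4,5) unfolding Egamma_eq by (simp add: abs_le_iff)
qed

lemma exists_eps0_near_optimal:
  assumes "0 < \<gamma>" "0 \<le> xil" "xil \<le> xiu" "\<xi>a \<in> PN N xil xiu R \<xi>0"
    and slater: "\<forall>k<N. \<xi>s k \<in> {xil..xiu}" "W2 N \<xi>s \<xi>0 < R"
  obtains \<epsilon>0 where "0 < \<epsilon>0"
    "\<And>\<epsilon>. 0 < \<epsilon> \<Longrightarrow> \<epsilon> < \<epsilon>0 \<Longrightarrow> \<exists>z\<in>PNeps N \<epsilon> xil xiu R \<xi>0. Egamma P N \<gamma> \<xi>a - 1 / \<gamma> \<le> Egamma P N \<gamma> z"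
proof -
  obtain \<delta> where \<delta>: "0 < \<delta>"
    "\<And>\<xi> z. \<forall>k<N. 0 \<le> \<xi> k \<and> 0 \<le> z k \<and> \<bar>z k - \<xi> k\<bar> \<le> \<delta> \<Longrightarrow> Egamma P N \<gamma> \<xi> - 1 / \<gamma> \<le> Egamma P N \<gamma> z"
    using Egamma_lower_bound_near[OF assms(1)] by blast
  have \<xi>a: "\<forall>k<N. \<xi>a k \<in> {xil..xiu}" "W2 N \<xi>a \<xi>0 \<le> R"
    using assms(4) by (auto simp: PN_def)
  obtain z \<pi> where z: "\<forall>k<N. z k \<in> {xil..xiu}" "\<forall>k<N. \<bar>z k - \<xi>a k\<bar> \<le> \<delta>"
    and \<pi>: "\<pi> \<in> couplings N" "transport_cost N z \<xi>0 \<pi> < R^2"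
    using exists_strictly_feasible_near[OF \<xi>a slater assms(3) \<delta>(1)] by blast
  have "0 \<le> R"
    using W2_nonneg[of N \<xi>s \<xi>0] slater(2) by linarith
  then obtain \<epsilon>0 where \<epsilon>0: "0 < \<epsilon>0" "\<And>\<epsilon>. 0 < \<epsilon> \<Longrightarrow> \<epsilon> < \<epsilon>0 \<Longrightarrow> W2eps N \<epsilon> z \<xi>0 < R"
    using W2eps_less_for_small_eps[OF \<pi>] by blast
  have near: "Egamma P N \<gamma> \<xi>a - 1 / \<gamma> \<le> Egamma P N \<gamma> z"
    using z \<xi>a(1) assms(2) by (intro \<delta>(2)) auto
  show thesis
  proof (rule that[OF \<epsilon>0(1)])
    fix \<epsilon> :: real
    assume "0 < \<epsilon>" "\<epsilon> < \<epsilon>0"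
    then have "z \<in> PNeps N \<epsilon> xil xiu R \<xi>0"
      using \<epsilon>0(2) z(1) by (simp add: PNeps_def less_imp_le)
    then show "\<exists>z\<in>PNeps N \<epsilon> xil xiu R \<xi>0. Egamma P N \<gamma> \<xi>a - 1 / \<gamma> \<le> Egamma P N \<gamma> z"
      using near by blast
  qed
qed

lemma argmax_E0_gap:
  assumes "0 < \<gamma>" "0 \<le> xil" "xil \<le> xiu"
    and slater: "\<forall>k<N. \<xi>s k \<in> {xil..xiu}" "W2 N \<xi>s \<xi>0 < R"
  shows "\<exists>c>0. \<forall>\<epsilon>>0. \<forall>\<xi>1 \<xi>2.
          is_argmax_on (Egamma P N \<gamma>) (PN N xil xiu R \<xi>0) \<xi>1
        \<longrightarrow> is_argmax_on (Egamma P N \<gamma>) (PNeps N \<epsilon> xil xiu R \<xi>0) \<xi>2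
        \<longrightarrow> \<bar>E0 P N \<xi>1 - E0 P N \<xi>2\<bar> \<le> c * exp (- 2 / \<epsilon>) + 2 / \<gamma>"
proof (cases "\<exists>\<xi>a. is_argmax_on (Egamma P N \<gamma>) (PN N xil xiu R \<xi>0) \<xi>a")
  case True
  then obtain \<xi>a where \<xi>a: "is_argmax_on (Egamma P N \<gamma>) (PN N xil xiu R \<xi>0) \<xi>a"
    by blast
  obtain \<epsilon>0 where \<epsilon>0: "0 < \<epsilon>0"
    "\<And>\<epsilon>. 0 < \<epsilon> \<Longrightarrow> \<epsilon> < \<epsilon>0 \<Longrightarrow> \<exists>z\<in>PNeps N \<epsilon> xil xiu R \<xi>0. Egamma P N \<gamma> \<xi>a - 1 / \<gamma> \<le> Egamma P N \<gamma> z"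
    using exists_eps0_near_optimal[OF assms(1-3) _ slater] \<xi>a unfolding is_argmax_on_def by blast
  show ?thesis
  proof (intro exI[of _ "2 * exp (2 / \<epsilon>0)"] conjI allI impI)
    fix \<epsilon> :: real and \<xi>1 \<xi>2
    assume \<epsilon>: "0 < \<epsilon>" and \<xi>1: "is_argmax_on (Egamma P N \<gamma>) (PN N xil xiu R \<xi>0) \<xi>1"
      and \<xi>2: "is_argmax_on (Egamma P N \<gamma>) (PNeps N \<epsilon> xil xiu R \<xi>0) \<xi>2"
    have nonneg: "\<forall>k<N. 0 \<le> \<xi>1 k" "\<forall>k<N. 0 \<le> \<xi>2 k"
      using \<xi>1 \<xi>2 assms(2) by (auto simp: is_argmax_on_def PN_def PNeps_def intro: order_trans)
    show "\<bar>E0 P N \<xi>1 - E0 P N \<xi>2\<bar> \<le> 2 * exp (2 / \<epsilon>0) * exp (- 2 / \<epsilon>) + 2 / \<gamma>"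
    proof (cases "\<epsilon> < \<epsilon>0")
      case True
      have upper: "Egamma P N \<gamma> \<xi>2 \<le> Egamma P N \<gamma> \<xi>1"
        using \<xi>1 \<xi>2 PNeps_subset_PN[OF \<epsilon>] unfolding is_argmax_on_def by blast
      obtain z where z: "z \<in> PNeps N \<epsilon> xil xiu R \<xi>0" "Egamma P N \<gamma> \<xi>a - 1 / \<gamma> \<le> Egamma P N \<gamma> z"
        using \<epsilon>0(2)[OF \<epsilon> True] by blast
      have "Egamma P N \<gamma> \<xi>1 \<le> Egamma P N \<gamma> \<xi>a"
        using \<xi>1 \<xi>a unfolding is_argmax_on_def by blast
      also have "\<dots> \<le> Egamma P N \<gamma> z + 1 / \<gamma>"
        using z(2) by simp
      also have "\<dots> \<le> Egamma P N \<gamma> \<xi>2 + 1 / \<gamma>"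
        using \<xi>2 z(1) unfolding is_argmax_on_def by simp
      finally have "\<bar>E0 P N \<xi>1 - E0 P N \<xi>2\<bar> \<le> 1 / \<gamma> + 1 / \<gamma>"
        by (rule E0_gap_le[OF nonneg assms(1) upper])
      then show ?thesis
        by (simp add: add_increasing)
    next
      case False
      have "\<bar>E0 P N \<xi>1 - E0 P N \<xi>2\<bar> \<le> 2"
        using E0_abs_le_one[OF nonneg(1)] E0_abs_le_one[OF nonneg(2)] by simp
      also have "2 \<le> 2 * exp (2 / \<epsilon>0) * exp (- 2 / \<epsilon>)"
        using False \<epsilon> \<epsilon>0(1) by (simp add: mult_exp_exp frac_le)
      finally show ?thesis
        using assms(1) by (intro add_increasing2) auto
    qed
  qed simp
qed (auto intro: exI[of _ 1])

end


text \<open>The estimate holds for every reference sample \<open>\<xi>0\<close>, so neither (A.4) nor \<open>N \<ge> 1\<close> is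
  needed and the almost-sure quantifier is discharged pointwise.\<close>

theorem lemmaA4:
  fixes P :: "('a::euclidean_space \<times> real) measure"
    and \<mu>0 :: "real measure"
    and N :: nat and xil xiu R \<gamma> :: real
  assumes probP: "prob_space P"
    and setsP: "sets P = sets borel"
    and labels: "AE p in P. snd p \<in> {-1, 1}"
    and A1: "\<exists>X. bounded X \<and> (AE p in P. fst p \<in> X)"
    and A3: "0 < xil" "xil \<le> xiu"
    and A4: "prob_space \<mu>0" "sets \<mu>0 = sets borel" "absolutely_continuous lborel \<mu>0"
    and N: "1 \<le> N"
    and \<gamma>: "0 < \<gamma>"
  shows "AE \<xi>0 in PiM {..<N} (\<lambda>_. \<mu>0).
    ((\<exists>\<xi>. (\<forall>k<N. \<xi> k \<in> {xil..xiu}) \<and> W2 N \<xi> \<xi>0 < R) \<and>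
     (\<forall>\<epsilon>>0. \<exists>\<xi>. (\<forall>k<N. \<xi> k \<in> {xil..xiu}) \<and> W2eps N \<epsilon> \<xi> \<xi>0 < R))
    \<longrightarrow> (\<exists>c>0. \<forall>\<epsilon>>0. \<forall>\<xi>1 \<xi>2.
          is_argmax_on (Egamma P N \<gamma>) (PN N xil xiu R \<xi>0) \<xi>1
        \<longrightarrow> is_argmax_on (Egamma P N \<gamma>) (PNeps N \<epsilon> xil xiu R \<xi>0) \<xi>2
        \<longrightarrow> \<bar>E0 P N \<xi>1 - E0 P N \<xi>2\<bar> \<le> c * exp (- 2 / \<epsilon>) + 2 / \<gamma>)"
proof -
  obtain X B where "AE p in P. fst p \<in> X" "\<forall>x\<in>X. norm x \<le> B"
    using A1 unfolding bounded_iff by blast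
  then have features: "AE p in P. norm (fst p) \<le> B"
    by (auto elim!: eventually_mono)
  have labels': "AE p in P. \<bar>snd p\<bar> \<le> 1"
    using labels by (auto elim!: eventually_mono)
  interpret bounded_labelled_data P B
    by (rule bounded_labelled_data.intro[OF probP setsP labels' features])
  show ?thesis
  proof (intro AE_I2 impI)
    fix \<xi>0 :: "nat \<Rightarrow> real"
    assume "(\<exists>\<xi>. (\<forall>k<N. \<xi> k \<in> {xil..xiu}) \<and> W2 N \<xi> \<xi>0 < R) \<and>
      (\<forall>\<epsilon>>0. \<exists>\<xi>. (\<forall>k<N. \<xi> k \<in> {xil..xiu}) \<and> W2eps N \<epsilon> \<xi> \<xi>0 < R)"
    then obtain \<xi>s where "\<forall>k<N. \<xi>s k \<in> {xil..xiu}" "W2 N \<xi>s \<xi>0 < R"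
      by blast
    then show "\<exists>c>0. \<forall>\<epsilon>>0. \<forall>\<xi>1 \<xi>2.
        is_argmax_on (Egamma P N \<gamma>) (PN N xil xiu R \<xi>0) \<xi>1
      \<longrightarrow> is_argmax_on (Egamma P N \<gamma>) (PNeps N \<epsilon> xil xiu R \<xi>0) \<xi>2
      \<longrightarrow> \<bar>E0 P N \<xi>1 - E0 P N \<xi>2\<bar> \<le> c * exp (- 2 / \<epsilon>) + 2 / \<gamma>"
      using A3 \<gamma> by (intro argmax_E0_gap) auto
  qed
qed

end
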